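(* Let $(G_n)$ be a sequence of finite $(q_n+1)$-regular graphs $G_n=(V_n,E_n)$, $q_n\in\mathbb{N}^+$, with $|V_n|\to\infty$. If the normalized spectral measures $\mu_n=\mu(G_n)$ satisfy $W_p(\mu_n,\mu_\infty)\to0$ for every $p\in[1,\infty)$, then $q_n=|V_n|^{o(1)}$, i.e. $\log q_n/\log|V_n|\to0$.
   Context: Graphs may have multi-edges and loops; adjacency matrix $A$ with $A_{ab}$ the number of directed edges from $a$ to $b$ (each undirected edge, including loops, giving two directed edges), $(q+1)$-regular meaning every vertex is the origin of $q+1$ directed edges. $\mu(G)=\frac1{|V|}\sum_k\delta_{q^{-1/2}\lambda_k(A)}$ with $\lambda_k(A)$ the eigenvalues of $A$ and $q=q_n$. Semicircle distribution $d\mu_\infty(x)=\frac1{2\pi}\sqrt{4-x^2}\mathbf 1_{|x|\le2}dx$. $W_p(\mu,\nu)=\inf_\gamma(\int|x-y|^pd\gamma)^{1/p}$ over couplings $\gamma$ of $\mu,\nu$. *)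

theory Defs
  imports "HOL-Probability.Probability" "HOL-Computational_Algebra.Polynomial_Factorial"
    "Jordan_Normal_Form.Char_Poly"
begin

text \<open>A finite (q+1)-regular multigraph with loops on the vertex set {0..<N}, given by its
  adjacency matrix: A a b = number of directed edges from a to b (an undirected edge gives
  two directed edges, in particular a loop adds 2 to the diagonal entry).\<close>
definition regular_multigraph :: "nat \<Rightarrow> (nat \<Rightarrow> nat \<Rightarrow> nat) \<Rightarrow> nat \<Rightarrow> bool" where
  "regular_multigraph N A q \<longleftrightarrow>
     (\<forall>a<N. \<forall>b<N. A a b = A b a) \<and>
     (\<forall>a<N. even (A a a)) \<and>
     (\<forall>a<N. (\<Sum>b<N. A a b) = q + 1)"

definition adj_matrix :: "nat \<Rightarrow> (nat \<Rightarrow> nat \<Rightarrow> nat) \<Rightarrow> real mat" where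
  "adj_matrix N A = mat N N (\<lambda>(i, j). real (A i j))"

definition eigenvalues_mset :: "real mat \<Rightarrow> real multiset" where
  "eigenvalues_mset M = proots (char_poly M)"

definition spectral_measure :: "nat \<Rightarrow> (nat \<Rightarrow> nat \<Rightarrow> nat) \<Rightarrow> nat \<Rightarrow> real measure" where
  "spectral_measure N A q =
     distr (measure_pmf (pmf_of_multiset
        (image_mset (\<lambda>l. l / sqrt (real q)) (eigenvalues_mset (adj_matrix N A))))) borel (\<lambda>x. x)"

definition semicircle :: "real measure" where
  "semicircle = density lborel (\<lambda>x. ennreal (indicator {-2..2} x * sqrt (4 - x\<^sup>2) / (2 * pi)))"

definition coupling :: "(real \<times> real) measure \<Rightarrow> real measure \<Rightarrow> real measure \<Rightarrow> bool" where
  "coupling \<gamma> \<mu> \<nu> \<longleftrightarrow> sets \<gamma> = sets (borel \<Otimes>\<^sub>M borel) \<and>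
     distr \<gamma> borel fst = \<mu> \<and> distr \<gamma> borel snd = \<nu>"

definition wasserstein_pow :: "real \<Rightarrow> real measure \<Rightarrow> real measure \<Rightarrow> ennreal" where
  "wasserstein_pow p \<mu> \<nu> =
     (INF \<gamma>\<in>{\<gamma>. coupling \<gamma> \<mu> \<nu>}. \<integral>\<^sup>+ z. ennreal (\<bar>fst z - snd z\<bar> powr p) \<partial>\<gamma>)"

definition wasserstein :: "real \<Rightarrow> real measure \<Rightarrow> real measure \<Rightarrow> ennreal" where
  "wasserstein p \<mu> \<nu> =
     (if wasserstein_pow p \<mu> \<nu> = \<infinity> then \<infinity>
      else ennreal (enn2real (wasserstein_pow p \<mu> \<nu>) powr (1 / p)))"

end

theory Submission
  imports Defs
begin

text \<open>The all-ones vector is an eigenvector of the adjacency matrix for the eigenvalue q + 1, so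
  the normalized spectral measure has an atom of mass at least 1/|V| at (q + 1)/sqrt q, while the
  semicircle law lives on [-2, 2]. Every coupling has to move that mass by at least sqrt q / 2 once
  q \<ge> 16, hence W_p^p \<ge> (sqrt q / 2)^p / |V|. As soon as W_p < 1 this gives
  log q \<le> 2 log |V| / p + log 16, and letting p grow yields log q = o(log |V|).\<close>

lemma const_row_sum_root_char_poly:
  fixes M :: "'a::field mat"
  assumes M: "M \<in> carrier_mat n n" and n: "n > 0"
    and row_sum: "\<And>i. i < n \<Longrightarrow> (\<Sum>j<n. M $$ (i, j)) = c"
  shows "c \<in># proots (char_poly M)"
proof -
  define v :: "'a vec" where "v = vec n (\<lambda>_. 1)"
  have "M *\<^sub>v v = c \<cdot>\<^sub>v v"
    using M by (intro eq_vecI) (auto simp: v_def scalar_prod_def row_sum atLeast0LessThan)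
  moreover have "v \<noteq> 0\<^sub>v n" "v \<in> carrier_vec n"
    using n by (auto simp: v_def vec_eq_iff)
  ultimately have "eigenvalue M c"
    unfolding eigenvalue_def eigenvector_def using M by blast
  moreover have "char_poly M \<noteq> 0"
    using degree_monic_char_poly[OF M] by auto
  ultimately show ?thesis
    using eigenvalue_root_char_poly[OF M] by simp
qed

lemma size_eigenvalues_mset_le:
  assumes "M \<in> carrier_mat n n"
  shows "size (eigenvalues_mset M) \<le> n"
  using size_proots_le[of "char_poly M"] degree_monic_char_poly[OF assms]
  by (simp add: eigenvalues_mset_def)

lemma regular_multigraph_degree_eigenvalue:
  assumes reg: "regular_multigraph N A q" and N: "N > 0"
  shows "real q + 1 \<in># eigenvalues_mset (adj_matrix N A)"
proof -
  have "(\<Sum>j<N. real (A i j)) = real q + 1" if "i < N" for i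
    using reg that unfolding regular_multigraph_def by (metis of_nat_1 of_nat_add of_nat_sum)
  then show ?thesis
    unfolding eigenvalues_mset_def adj_matrix_def
    by (intro const_row_sum_root_char_poly[OF _ N]) auto
qed

lemma pmf_of_multiset_ge_inverse_bound:
  assumes "x \<in># M" and "size M \<le> n"
  shows "1 / real n \<le> pmf (pmf_of_multiset M) x"
proof -
  have M: "M \<noteq> {#}" using assms(1) by auto
  then have "1 / real n \<le> real (count M x) / real (size M)"
    using assms by (intro frac_le) (auto simp: Suc_le_eq nonempty_has_size)
  then show ?thesis using M by simp
qed

lemma spectral_measure_degree_atom:
  assumes reg: "regular_multigraph N A q" and N: "N > 0"
  shows "ennreal (1 / real N) \<le> emeasure (spectral_measure N A q) {(real q + 1) / sqrt (real q)}"
proof -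
  define M where "M = image_mset (\<lambda>l. l / sqrt (real q)) (eigenvalues_mset (adj_matrix N A))"
  define x where "x = (real q + 1) / sqrt (real q)"
  have "x \<in># M"
    using regular_multigraph_degree_eigenvalue[OF reg N] by (auto simp: M_def x_def)
  moreover have "size M \<le> N"
    using size_eigenvalues_mset_le[of "adj_matrix N A" N] by (simp add: M_def adj_matrix_def)
  ultimately have "1 / real N \<le> pmf (pmf_of_multiset M) x"
    by (rule pmf_of_multiset_ge_inverse_bound)
  moreover have "emeasure (spectral_measure N A q) {x} = pmf (pmf_of_multiset M) x"
    unfolding spectral_measure_def M_def[symmetric]
    by (simp add: emeasure_distr emeasure_pmf_single)
  ultimately show ?thesis by (simp add: x_def ennreal_leI)
qed

lemma emeasure_semicircle_outside: "emeasure semicircle (- {-2..2}) = 0"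
proof -
  have "emeasure semicircle (- {-2..2}) =
    (\<integral>\<^sup>+ x. ennreal (indicator {-2..2} x * sqrt (4 - x\<^sup>2) / (2 * pi)) * indicator (- {-2..2}) x \<partial>lborel)"
    unfolding semicircle_def by (rule emeasure_density) auto
  also have "\<dots> = (\<integral>\<^sup>+ (x::real). 0 \<partial>lborel)"
    by (rule nn_integral_cong) (auto simp: indicator_def)
  finally show ?thesis by simp
qed

lemma coupling_cost_ge_atom:
  assumes c: "coupling \<gamma> \<mu> \<nu>" and \<nu>: "emeasure \<nu> (- {-R..R}) = 0"
    and x: "R < x" and p: "0 \<le> p"
  shows "emeasure \<mu> {x} * ennreal ((x - R) powr p)
     \<le> (\<integral>\<^sup>+ z. ennreal (\<bar>fst z - snd z\<bar> powr p) \<partial>\<gamma>)"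
proof -
  have sets_\<gamma>: "sets \<gamma> = sets (borel \<Otimes>\<^sub>M (borel :: real measure))"
    using c by (simp add: coupling_def)
  have space_\<gamma>: "space \<gamma> = UNIV"
    using sets_eq_imp_space_eq[OF sets_\<gamma>] by (simp add: space_pair_measure)
  have fst: "fst \<in> measurable \<gamma> borel" and snd: "snd \<in> measurable \<gamma> borel"
    by (simp_all add: measurable_cong_sets[OF sets_\<gamma> refl])
  have "\<mu> = distr \<gamma> borel fst" and "\<nu> = distr \<gamma> borel snd"
    using c by (simp_all add: coupling_def)
  then have marginals: "emeasure \<mu> B = emeasure \<gamma> (fst -` B)"
    "emeasure \<nu> B = emeasure \<gamma> (snd -` B)" if "B \<in> sets borel" for B
    using emeasure_distr[OF fst that] emeasure_distr[OF snd that] by (simp_all add: space_\<gamma>)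
  define S where "S = {x} \<times> {-R..R}"
  define T :: "(real \<times> real) set" where "T = snd -` (- {-R..R})"
  have S: "S \<in> sets \<gamma>"
    unfolding sets_\<gamma> S_def by (auto intro!: pair_measureI)
  have T: "T \<in> sets \<gamma>"
    using measurable_sets[OF snd, of "- {-R..R}"] by (simp add: T_def space_\<gamma>)
  have "emeasure \<mu> {x} = emeasure \<gamma> (fst -` {x})"
    by (simp add: marginals)
  also have "\<dots> \<le> emeasure \<gamma> (S \<union> T)"
    using S T by (intro emeasure_mono) (auto simp: S_def T_def)
  also have "\<dots> \<le> emeasure \<gamma> S + emeasure \<gamma> T"
    using S T by (rule emeasure_subadditive)
  also have "emeasure \<gamma> T = 0"
    using \<nu> by (simp add: marginals T_def)
  finally have "emeasure \<mu> {x} * ennreal ((x - R) powr p) \<le> emeasure \<gamma> S * ennreal ((x - R) powr p)"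
    by (intro mult_right_mono) auto
  also have "\<dots> = (\<integral>\<^sup>+ z. ennreal ((x - R) powr p) * indicator S z \<partial>\<gamma>)"
    using nn_integral_cmult_indicator[OF S, of "ennreal ((x - R) powr p)"] by (simp add: mult.commute)
  also have "\<dots> \<le> (\<integral>\<^sup>+ z. ennreal (\<bar>fst z - snd z\<bar> powr p) \<partial>\<gamma>)"
  proof (intro nn_integral_mono)
    fix z
    have "(x - R) powr p \<le> \<bar>fst z - snd z\<bar> powr p" if "z \<in> S"
      using that x p by (intro powr_mono2) (auto simp: S_def)
    then show "ennreal ((x - R) powr p) * indicator S z \<le> ennreal (\<bar>fst z - snd z\<bar> powr p)"
      by (auto simp: indicator_def ennreal_leI)
  qed
  finally show ?thesis .
qed

lemma wasserstein_pow_ge_atom: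
  assumes "emeasure \<nu> (- {-R..R}) = 0" and "R < x" and "0 \<le> p"
  shows "emeasure \<mu> {x} * ennreal ((x - R) powr p) \<le> wasserstein_pow p \<mu> \<nu>"
  unfolding wasserstein_pow_def by (intro INF_greatest coupling_cost_ge_atom[OF _ assms]) simp

lemma wasserstein_pow_less_one:
  assumes "wasserstein p \<mu> \<nu> < 1" and p: "0 < p"
  shows "wasserstein_pow p \<mu> \<nu> < 1"
proof -
  define W where "W = wasserstein_pow p \<mu> \<nu>"
  have W_fin: "W \<noteq> \<infinity>" and root: "enn2real W powr (1 / p) < 1"
    using assms(1) unfolding wasserstein_def W_def[symmetric] by (auto split: if_splits)
  have "enn2real W < 1"
  proof (rule ccontr)
    assume "\<not> enn2real W < 1"
    then have "1 \<le> enn2real W powr (1 / p)"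
      using p by (intro ge_one_powr_ge_zero) auto
    then show False using root by simp
  qed
  then have "ennreal (enn2real W) < 1"
    by simp
  moreover have "ennreal (enn2real W) = W"
    using W_fin by (simp add: ennreal_enn2real_if)
  ultimately show ?thesis
    unfolding W_def[symmetric] by simp
qed

lemma spectral_atom_powr_less_size:
  assumes reg: "regular_multigraph N A q" and N: "N > 0" and p: "0 < p"
    and x: "2 < (real q + 1) / sqrt (real q)"
    and w: "wasserstein p (spectral_measure N A q) semicircle < 1"
  shows "((real q + 1) / sqrt (real q) - 2) powr p < real N"
proof -
  let ?x = "(real q + 1) / sqrt (real q)"
  have "ennreal (1 / real N) * ennreal ((?x - 2) powr p)
      \<le> emeasure (spectral_measure N A q) {?x} * ennreal ((?x - 2) powr p)"
    using spectral_measure_degree_atom[OF reg N] by (intro mult_right_mono) auto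
  also have "\<dots> \<le> wasserstein_pow p (spectral_measure N A q) semicircle"
    using emeasure_semicircle_outside x p by (intro wasserstein_pow_ge_atom) auto
  also have "\<dots> < 1"
    using w p by (rule wasserstein_pow_less_one)
  finally have "1 / real N * (?x - 2) powr p < 1"
    by (simp add: ennreal_mult'[symmetric] ennreal_less_one_iff)
  then show ?thesis using N by (simp add: field_simps)
qed

lemma ln_degree_le:
  assumes reg: "regular_multigraph N A q" and N: "N > 0" and q: "q \<ge> 1" and p: "0 < p"
    and w: "wasserstein p (spectral_measure N A q) semicircle < 1"
  shows "ln (real q) \<le> 2 * ln (real N) / p + ln 16"
proof (cases "q < 16")
  case True
  then have "ln (real q) \<le> ln 16" using q by simp
  moreover have "0 \<le> 2 * ln (real N) / p" using N p by simp
  ultimately show ?thesis by linarith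
next
  case False
  define x where "x = (real q + 1) / sqrt (real q)"
  have sqrt_q: "4 \<le> sqrt (real q)"
    using False real_sqrt_le_mono[of 16 "real q"] by simp
  have "sqrt (real q) \<le> x"
    unfolding x_def using sqrt_q by (simp add: le_divide_eq)
  then have half: "sqrt (real q) / 2 \<le> x - 2" and "2 < x"
    using sqrt_q by auto
  have "(sqrt (real q) / 2) powr p \<le> (x - 2) powr p"
    using half sqrt_q p by (intro powr_mono2) auto
  also have "\<dots> < real N"
    using spectral_atom_powr_less_size[OF reg N p _ w] \<open>2 < x\<close> by (simp add: x_def)
  finally have "ln ((sqrt (real q) / 2) powr p) < ln (real N)"
    using sqrt_q N q by (subst ln_less_cancel_iff) auto
  then have "p * ln (sqrt (real q) / 2) < ln (real N)"
    using sqrt_q by (simp add: ln_powr)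
  moreover have "ln (sqrt (real q) / 2) = ln (real q) / 2 - ln 2"
    using q by (simp add: ln_div ln_sqrt)
  ultimately have "ln (real q) < 2 * ln (real N) / p + 2 * ln 2"
    using p by (simp add: field_simps)
  moreover have "ln (16::real) = 4 * ln 2"
    using ln_realpow[of 2 4] by simp
  ultimately show ?thesis
    using ln_gt_zero[of 2] by linarith
qed

lemma ln_degree_ratio_le:
  assumes reg: "regular_multigraph N A q" and q: "q \<ge> 1" and p: "0 < p"
    and w: "wasserstein p (spectral_measure N A q) semicircle < 1"
    and ln_N: "0 < ln (real N)"
  shows "ln (real q) / ln (real N) \<le> 2 / p + ln 16 / ln (real N)"
proof -
  have "N > 0" using ln_N by (cases N) auto
  then have "ln (real q) \<le> 2 * ln (real N) / p + ln 16"
    using w by (rule ln_degree_le[OF reg _ q p])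
  then show ?thesis using ln_N by (simp add: field_simps)
qed

theorem lemma4p1:
  fixes N :: "nat \<Rightarrow> nat" and A :: "nat \<Rightarrow> nat \<Rightarrow> nat \<Rightarrow> nat" and q :: "nat \<Rightarrow> nat"
  assumes q_pos: "\<And>n. q n \<ge> 1"
    and reg: "\<And>n. regular_multigraph (N n) (A n) (q n)"
    and size: "filterlim (\<lambda>n. N n) at_top sequentially"
    and conv: "\<And>p. 1 \<le> p \<Longrightarrow>
       (\<lambda>n. wasserstein p (spectral_measure (N n) (A n) (q n)) semicircle) \<longlonglongrightarrow> 0"
  shows "(\<lambda>n. ln (real (q n)) / ln (real (N n))) \<longlonglongrightarrow> 0"
proof -
  have ln_N: "filterlim (\<lambda>n. ln (real (N n))) at_top sequentially"
    using filterlim_compose[OF ln_at_top filterlim_compose[OF filterlim_real_sequentially size]] .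
  then have ln_N_pos: "eventually (\<lambda>n. 0 < ln (real (N n))) sequentially"
    by (simp add: filterlim_at_top_dense)
  have ln_q: "0 \<le> ln (real (q n))" for n
    using q_pos[of n] by simp
  have "eventually (\<lambda>n. ln (real (q n)) / ln (real (N n)) < r) sequentially" if r: "0 < r" for r
  proof -
    define p where "p = 1 + 4 / r"
    have p: "1 \<le> p" "0 < p" "2 / p < r / 2"
      using r by (auto simp: p_def field_simps)
    have "((\<lambda>n. ln 16 / ln (real (N n))) \<longlongrightarrow> 0) sequentially"
      by (rule tendsto_divide_0[OF tendsto_const filterlim_at_top_imp_at_infinity[OF ln_N]])
    then have "eventually (\<lambda>n. ln 16 / ln (real (N n)) < r / 2) sequentially"
      by (rule order_tendstoD(2)) (use r in simp)
    moreover have "eventually (\<lambda>n. wasserstein p (spectral_measure (N n) (A n) (q n)) semicircle < 1) sequentially"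
      using order_tendstoD(2)[OF conv[OF p(1)]] by simp
    ultimately show ?thesis
      using ln_N_pos
    proof eventually_elim
      case (elim n)
      then show ?case
        using ln_degree_ratio_le[OF reg q_pos p(2) elim(2,3)] p(3) by linarith
    qed
  qed
  moreover have "eventually (\<lambda>n. 0 \<le> ln (real (q n)) / ln (real (N n))) sequentially"
    using ln_N_pos by eventually_elim (simp add: ln_q)
  ultimately show ?thesis
    by (intro order_tendstoI) (auto elim: eventually_mono)
qed

end
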